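(* Let $I=\{1,\dots,\ell\}$, $J=\{\ell+1,\dots,p\}$, let $h_1,\dots,h_p\colon\mathbb R^n\times\mathbb R^m\to\overline{\mathbb R}$ be given and define $\Gamma\colon\mathbb R^n\rightrightarrows\mathbb R^m$ by $\Gamma(x):=\{y\in\mathbb R^m\mid h_i(x,y)\le 0\ (i\in I),\ h_i(x,y)=0\ (i\in J)\}$. Let $(\bar x,\bar y)\in\operatorname{gph}\Gamma$ and suppose that $\Gamma$ is R-regular at $(\bar x,\bar y)$ with respect to $\operatorname{dom}\Gamma$. Furthermore, let $h_1,\dots,h_p$ be continuous at $(\bar x,\bar y)$ and let $h_1(x,\cdot),\dots,h_p(x,\cdot)\colon\mathbb R^m\to\mathbb R$ be continuous for each $x\in\operatorname{dom}\Gamma$ from a neighborhood of $\bar x$. Then $\Gamma$ is inner semicontinuous at $(\bar x,\bar y)$ with respect to $\operatorname{dom}\Gamma$.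
   Context: $\operatorname{dom}\Gamma:=\{x\mid\Gamma(x)\neq\emptyset\}$, $\operatorname{gph}\Gamma:=\{(x,y)\mid y\in\Gamma(x)\}$; $\|\cdot\|$ is the Euclidean norm and $\operatorname{dist}(y,A):=\inf\{\|z-y\|\mid z\in A\}$ (equal to $+\infty$ if $A=\emptyset$). $\Gamma$ is called R-regular at $(\bar x,\bar y)\in\operatorname{gph}\Gamma$ with respect to $\Omega\subset\mathbb R^n$ if there exist $\kappa>0$ and a neighborhood $U$ of $(\bar x,\bar y)$ such that for all $(x,y)\in U\cap(\Omega\times\mathbb R^m)$: $\operatorname{dist}(y,\Gamma(x))\le\kappa\max\{0,\max_{i\in I}h_i(x,y),\max_{i\in J}|h_i(x,y)|\}$. A set-valued map $\Upsilon$ is inner semicontinuous at $(\bar x,\bar y)\in\operatorname{gph}\Upsilon$ with respect to $\Omega$ if for every sequence $\{x^k\}\subset\Omega$ with $x^k\to\bar x$ there is a sequence $y^k\to\bar y$ with $y^k\in\Upsilon(x^k)$ for all sufficiently large $k$. *)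

theory Defs
  imports "HOL-Analysis.Analysis" "HOL-Library.Extended_Real"
begin

definition Gam :: "(nat \<Rightarrow> 'a \<Rightarrow> 'b \<Rightarrow> ereal) \<Rightarrow> nat \<Rightarrow> nat \<Rightarrow> 'a \<Rightarrow> 'b set" where
  "Gam h l p x = {y. (\<forall>i\<in>{1..l}. h i x y \<le> 0) \<and> (\<forall>i\<in>{l+1..p}. h i x y = 0)}"

definition sv_dom :: "('a \<Rightarrow> 'b set) \<Rightarrow> 'a set" where
  "sv_dom G = {x. G x \<noteq> {}}"

definition sv_gph :: "('a \<Rightarrow> 'b set) \<Rightarrow> ('a \<times> 'b) set" where
  "sv_gph G = {(x, y). y \<in> G x}"

definition edist :: "'b::metric_space \<Rightarrow> 'b set \<Rightarrow> ereal" where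
  "edist y A = (if A = {} then \<infinity> else ereal (infdist y A))"

definition residual :: "(nat \<Rightarrow> 'a \<Rightarrow> 'b \<Rightarrow> ereal) \<Rightarrow> nat \<Rightarrow> nat \<Rightarrow> 'a \<Rightarrow> 'b \<Rightarrow> ereal" where
  "residual h l p x y = Max ({0} \<union> (\<lambda>i. h i x y) ` {1..l} \<union> (\<lambda>i. \<bar>h i x y\<bar>) ` {l+1..p})"

definition R_regular ::
  "(nat \<Rightarrow> 'a::real_normed_vector \<Rightarrow> 'b::real_normed_vector \<Rightarrow> ereal) \<Rightarrow> nat \<Rightarrow> nat \<Rightarrow> 'a \<Rightarrow> 'b \<Rightarrow> 'a set \<Rightarrow> bool" where
  "R_regular h l p xb yb \<Omega> \<longleftrightarrow>
     (\<exists>\<kappa>>0. \<exists>U. open U \<and> (xb, yb) \<in> U \<and>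
        (\<forall>x y. (x, y) \<in> U \<and> x \<in> \<Omega> \<longrightarrow> edist y (Gam h l p x) \<le> ereal \<kappa> * residual h l p x y))"

definition inner_semicont :: "('a::topological_space \<Rightarrow> 'b::topological_space set) \<Rightarrow> 'a \<Rightarrow> 'b \<Rightarrow> 'a set \<Rightarrow> bool" where
  "inner_semicont G xb yb \<Omega> \<longleftrightarrow>
     (\<forall>xk. (\<forall>k. xk k \<in> \<Omega>) \<and> xk \<longlonglongrightarrow> xb \<longrightarrow>
        (\<exists>yk. yk \<longlonglongrightarrow> yb \<and> (\<forall>\<^sub>F k in sequentially. yk k \<in> G (xk k))))"

end

theory Submission
  imports Defs
begin

text \<open>R-regularity bounds the distance from \<open>yb\<close> to \<open>Gam (xk k)\<close> by \<open>\<kappa>\<close> times the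
  residual at \<open>(xk k, yb)\<close>. Since \<open>yb\<close> is feasible at \<open>xb\<close> and the \<open>h i\<close> are continuous at
  \<open>(xb, yb)\<close>, that residual tends to 0, so \<open>Gam (xk k)\<close> contains points converging to \<open>yb\<close>.\<close>

lemma ex_dist_less_infdist_add:
  fixes x :: "'a::metric_space"
  assumes "A \<noteq> {}" "e > 0"
  shows "\<exists>a\<in>A. dist x a < infdist x A + e"
proof -
  have "(INF a\<in>A. dist x a) < infdist x A + e"
    using assms by (simp add: infdist_notempty)
  moreover have "bdd_below ((\<lambda>a. dist x a) ` A)"
    by (rule bdd_belowI[of _ 0]) auto
  ultimately show ?thesis
    using assms(1) by (simp add: cINF_less_iff)
qed

lemma edist_nonneg: "0 \<le> edist y A"
  by (simp add: edist_def infdist_nonneg)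

lemma tendsto_points_of_edist_tendsto_0:
  fixes y :: "'a::metric_space"
  assumes lim: "(\<lambda>k. edist y (A k)) \<longlonglongrightarrow> 0"
  shows "\<exists>yk. yk \<longlonglongrightarrow> y \<and> (\<forall>\<^sub>F k in sequentially. yk k \<in> A k)"
proof -
  have "\<forall>\<^sub>F k in sequentially. edist y (A k) < 1"
    using lim by (rule order_tendstoD) simp
  then have nonempty: "\<forall>\<^sub>F k in sequentially. A k \<noteq> {}"
    by eventually_elim (auto simp: edist_def)
  have "\<forall>\<^sub>F k in sequentially. edist y (A k) = ereal (infdist y (A k))"
    using nonempty by eventually_elim (simp add: edist_def)
  from Lim_transform_eventually[OF lim this]
  have "(\<lambda>k. infdist y (A k)) \<longlonglongrightarrow> 0"
    by (simp add: zero_ereal_def)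
  then have bound_lim: "(\<lambda>k. infdist y (A k) + 1 / (real k + 1)) \<longlonglongrightarrow> 0"
    using tendsto_add[OF _ LIMSEQ_inverse_real_of_nat]
    by (simp add: inverse_eq_divide add.commute)
  \<comment> \<open>The sets \<open>A k\<close> need not be closed, so the infimum is only approximated.\<close>
  have "\<exists>a. A k \<noteq> {} \<longrightarrow> a \<in> A k \<and> dist y a < infdist y (A k) + 1 / (real k + 1)" for k
    using ex_dist_less_infdist_add[of "A k" "1 / (real k + 1)" y] by auto
  then have "\<exists>yk. \<forall>k. A k \<noteq> {} \<longrightarrow>
      yk k \<in> A k \<and> dist y (yk k) < infdist y (A k) + 1 / (real k + 1)"
    by (intro choice allI)
  then obtain yk where yk: "\<forall>k. A k \<noteq> {} \<longrightarrow>
      yk k \<in> A k \<and> dist y (yk k) < infdist y (A k) + 1 / (real k + 1)" ..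
  have "\<forall>\<^sub>F k in sequentially. dist (yk k) y \<le> infdist y (A k) + 1 / (real k + 1)"
    using nonempty by eventually_elim (simp add: yk dist_commute less_imp_le)
  then have "(\<lambda>k. dist (yk k) y) \<longlonglongrightarrow> 0"
    using tendsto_sandwich[OF _ _ tendsto_const bound_lim] by simp
  then have "yk \<longlonglongrightarrow> y"
    using tendsto_dist_iff by blast
  moreover have "\<forall>\<^sub>F k in sequentially. yk k \<in> A k"
    using nonempty by eventually_elim (simp add: yk)
  ultimately show ?thesis by blast
qed

lemma residual_nonneg: "0 \<le> residual h l p x y"
  unfolding residual_def by (rule Max_ge) auto

lemma ereal_abs_less: "x < a \<Longrightarrow> - a < x \<Longrightarrow> \<bar>x\<bar> < (a::ereal)"
  by (cases x; cases a) auto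

lemma residual_tendsto_0:
  assumes lp: "l \<le> p" and feasible: "y \<in> Gam h l p x"
    and lim: "\<forall>i\<in>{1..p}. ((\<lambda>k. h i (f k) (g k)) \<longlongrightarrow> h i x y) F"
  shows "((\<lambda>k. residual h l p (f k) (g k)) \<longlongrightarrow> 0) F"
proof (rule order_tendstoI)
  fix a :: ereal
  assume "a < 0"
  then show "\<forall>\<^sub>F k in F. a < residual h l p (f k) (g k)"
    by (intro always_eventually allI) (meson residual_nonneg less_le_trans)
next
  fix a :: ereal
  assume a: "0 < a"
  have ineq: "\<forall>\<^sub>F k in F. \<forall>i\<in>{1..l}. h i (f k) (g k) < a"
  proof (rule eventually_ball_finite[rule_format], simp)
    fix i assume i: "i \<in> {1..l}"
    then have "h i x y < a"
      using feasible a by (auto simp: Gam_def intro: le_less_trans)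
    moreover have "((\<lambda>k. h i (f k) (g k)) \<longlongrightarrow> h i x y) F"
      using lim i lp by simp
    ultimately show "\<forall>\<^sub>F k in F. h i (f k) (g k) < a"
      by (simp add: order_tendstoD(2))
  qed
  have eq: "\<forall>\<^sub>F k in F. \<forall>i\<in>{l+1..p}. \<bar>h i (f k) (g k)\<bar> < a"
  proof (rule eventually_ball_finite[rule_format], simp)
    fix i assume i: "i \<in> {l+1..p}"
    then have "h i x y = 0"
      using feasible by (simp add: Gam_def)
    moreover have "((\<lambda>k. h i (f k) (g k)) \<longlongrightarrow> h i x y) F"
      using lim i by simp
    ultimately have lim_i: "((\<lambda>k. h i (f k) (g k)) \<longlongrightarrow> 0) F"
      by simp
    have "- a < 0"
      using a by (cases a) auto
    then have "\<forall>\<^sub>F k in F. h i (f k) (g k) < a" "\<forall>\<^sub>F k in F. - a < h i (f k) (g k)"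
      using a by (simp_all add: order_tendstoD[OF lim_i])
    then show "\<forall>\<^sub>F k in F. \<bar>h i (f k) (g k)\<bar> < a"
      by eventually_elim (rule ereal_abs_less)
  qed
  from ineq eq show "\<forall>\<^sub>F k in F. residual h l p (f k) (g k) < a"
  proof eventually_elim
    case (elim k)
    then show ?case
      using a unfolding residual_def by (subst Max_less_iff) auto
  qed
qed

theorem lemma2p5:
  fixes h :: "nat \<Rightarrow> real ^ 'n \<Rightarrow> real ^ 'm \<Rightarrow> ereal"
    and l p :: nat and xb :: "real ^ 'n" and yb :: "real ^ 'm"
  assumes lp: "l \<le> p"
    and gph: "(xb, yb) \<in> sv_gph (Gam h l p)"
    and Rreg: "R_regular h l p xb yb (sv_dom (Gam h l p))"
    and cont: "\<forall>i\<in>{1..p}. continuous (at (xb, yb)) (\<lambda>z. h i (fst z) (snd z))"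
    and contx: "\<exists>V. open V \<and> xb \<in> V \<and>
        (\<forall>x\<in>V \<inter> sv_dom (Gam h l p). \<forall>i\<in>{1..p}.
           (\<forall>y. \<bar>h i x y\<bar> \<noteq> \<infinity>) \<and> continuous_on UNIV (\<lambda>y. h i x y))"
  shows "inner_semicont (Gam h l p) xb yb (sv_dom (Gam h l p))"
  unfolding inner_semicont_def
proof (intro allI impI, elim conjE)
  fix xk assume dom: "\<forall>k. xk k \<in> sv_dom (Gam h l p)" and lim: "xk \<longlonglongrightarrow> xb"
  obtain \<kappa> U where "\<kappa> > 0" "open U" "(xb, yb) \<in> U"
    and bound: "\<And>x y. (x, y) \<in> U \<Longrightarrow> x \<in> sv_dom (Gam h l p) \<Longrightarrow>
      edist y (Gam h l p x) \<le> ereal \<kappa> * residual h l p x y"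
    using Rreg unfolding R_regular_def by blast
  have feasible: "yb \<in> Gam h l p xb"
    using gph by (simp add: sv_gph_def)
  have pair_lim: "(\<lambda>k. (xk k, yb)) \<longlonglongrightarrow> (xb, yb)"
    using lim by (intro tendsto_Pair) auto
  have "\<forall>i\<in>{1..p}. (\<lambda>k. h i (xk k) yb) \<longlonglongrightarrow> h i xb yb"
    using isCont_tendsto_compose[OF _ pair_lim, of "\<lambda>z. h _ (fst z) (snd z)"] cont by simp
  then have residual_lim: "(\<lambda>k. residual h l p (xk k) yb) \<longlonglongrightarrow> 0"
    by (rule residual_tendsto_0[OF lp feasible])
  have upper_lim: "(\<lambda>k. ereal \<kappa> * residual h l p (xk k) yb) \<longlonglongrightarrow> 0"
    using tendsto_cmult_ereal[of "ereal \<kappa>", OF _ residual_lim] by simp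
  have "\<forall>\<^sub>F k in sequentially. edist yb (Gam h l p (xk k)) \<le> ereal \<kappa> * residual h l p (xk k) yb"
    using topological_tendstoD[OF pair_lim \<open>open U\<close> \<open>(xb, yb) \<in> U\<close>]
    by eventually_elim (simp add: bound dom)
  from tendsto_sandwich[OF _ this tendsto_const upper_lim]
  have "(\<lambda>k. edist yb (Gam h l p (xk k))) \<longlonglongrightarrow> 0"
    by (simp add: edist_nonneg)
  then show "\<exists>yk. yk \<longlonglongrightarrow> yb \<and> (\<forall>\<^sub>F k in sequentially. yk k \<in> Gam h l p (xk k))"
    by (rule tendsto_points_of_edist_tendsto_0)
qed

end
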